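(* Define $a_0 = 0$ and $a_n = \sum_{k=0}^{n-1} k!\,(n-k-1)!$ for $n \geq 1$. Then for every natural number $n$, $$G_n = \sum_{k=0}^{n} (-1)^{k-1} a_k\, S(n,k).$$
   Context: The Genocchi numbers $G_n$ ($n \in \mathbb{N}$) are defined by the exponential generating function $\frac{2x}{e^x+1} = \sum_{n=0}^{\infty} G_n \frac{x^n}{n!}$. The Stirling numbers of the second kind $S(n,k)$ ($0 \le k \le n$) are the integers defined by the polynomial identity $X^n = \sum_{k=0}^{n} S(n,k)\, X(X-1)\cdots(X-k+1)$. *)

theory Defs
  imports "HOL-Combinatorics.Stirling" "HOL-Computational_Algebra.Formal_Power_Series"
begin

definition genocchi :: "nat \<Rightarrow> rat" where
  "genocchi n = fact n * fps_nth (2 * fps_X / (fps_exp 1 + 1)) n"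

definition a_seq :: "nat \<Rightarrow> nat" where
  "a_seq n = (if n = 0 then 0 else (\<Sum>k<n. fact k * fact (n - k - 1)))"

end

(*
  Both sides f satisfy the binomial self-recurrence
    f n + (\<Sum>j\<le>n. (n choose j) * f j) = 2 [n = 1],
  which determines f since the coefficient of f n is 2.  For the Genocchi numbers this is the
  identity F * (e^x + 1) = 2x for their exponential generating function F.  For the Stirling sum
  the binomial transform is absorbed by S(n+1,k+1) = \<Sum>j (n choose j) S(j,k); the recurrence
  2 a(m+1) = (m+1) a(m) + 2 m! then reduces everything to the telescoping identity
  \<Sum>k (-1)^k k! S(m+1,k+1) = [m = 0].
*)
theory Submission
  imports Defs
begin

unbundle fps_syntax

lemma a_seq_Suc: "a_seq (Suc m) = (\<Sum>j\<le>m. fact j * fact (m - j))"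
  by (simp add: a_seq_def lessThan_Suc_atMost)

lemma Suc_mult_fact_mult_fact_diff:
  assumes "j < m"
  shows "Suc m * (fact j * fact (m - Suc j))
      = fact (Suc j) * fact (m - Suc j) + fact j * (fact (m - j) :: nat)"
proof -
  obtain r where "m = Suc (j + r)" using assms less_imp_Suc_add by blast
  then show ?thesis by (simp add: algebra_simps)
qed

lemma a_seq_Suc_rec: "2 * a_seq (Suc m) = Suc m * a_seq m + 2 * fact m"
proof -
  have "Suc m * a_seq m = (\<Sum>j<m. Suc m * (fact j * fact (m - Suc j)))"
    by (simp add: a_seq_def sum_distrib_left del: mult_Suc)
  also have "\<dots> = (\<Sum>j<m. fact (Suc j) * fact (m - Suc j) + fact j * fact (m - j))"
    by (rule sum.cong) (simp_all add: Suc_mult_fact_mult_fact_diff del: fact_Suc mult_Suc)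
  also have "\<dots> = (\<Sum>j<m. fact (Suc j) * fact (m - Suc j)) + (\<Sum>j<m. fact j * fact (m - j))"
    by (rule sum.distrib)
  finally have "Suc m * a_seq m = \<dots>" .
  moreover have "a_seq (Suc m) = fact m + (\<Sum>j<m. fact (Suc j) * fact (m - Suc j))"
    by (simp add: a_seq_Suc sum.atMost_shift del: fact_Suc)
  moreover have "a_seq (Suc m) = (\<Sum>j<m. fact j * fact (m - j)) + fact m"
    by (simp add: a_seq_Suc lessThan_Suc_atMost[symmetric])
  ultimately show ?thesis
    by linarith
qed

lemma Stirling_Suc_Suc_eq_sum_binomial:
  "Stirling (Suc n) (Suc k) = (\<Sum>j\<le>n. (n choose j) * Stirling j k)"
proof (induction n arbitrary: k)
  case 0
  then show ?case by (cases k) simp_all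
next
  case (Suc n)
  have shifted: "(\<Sum>j\<le>n. (n choose j) * Stirling (Suc j) k)
      = k * Stirling (Suc n) (Suc k) + Stirling (Suc n) k"
  proof (cases k)
    case (Suc k')
    have "(\<Sum>j\<le>n. (n choose j) * Stirling (Suc j) k)
        = k * (\<Sum>j\<le>n. (n choose j) * Stirling j k) + (\<Sum>j\<le>n. (n choose j) * Stirling j k')"
      using Suc by (simp add: sum.distrib sum_distrib_left algebra_simps)
    also have "\<dots> = k * Stirling (Suc n) (Suc k) + Stirling (Suc n) k"
      using Suc by (simp only: Suc.IH)
    finally show ?thesis .
  qed simp
  have "(\<Sum>j\<le>Suc n. (Suc n choose j) * Stirling j k)
      = (\<Sum>j\<le>Suc n. (n choose j) * Stirling j k) + (\<Sum>j\<le>n. (n choose j) * Stirling (Suc j) k)"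
    by (subst (1 2) sum.atMost_Suc_shift) (simp add: sum.distrib algebra_simps)
  also have "\<dots> = Stirling (Suc n) (Suc k) + (k * Stirling (Suc n) (Suc k) + Stirling (Suc n) k)"
    by (simp only: shifted Suc.IH) simp
  also have "\<dots> = Stirling (Suc (Suc n)) (Suc k)"
    by simp
  finally show ?case ..
qed

lemma sum_Stirling_Suc_Suc:
  fixes b :: "nat \<Rightarrow> 'a::comm_semiring_1"
  shows "(\<Sum>k\<le>n. b k * of_nat (Stirling (Suc n) (Suc k)))
       = (\<Sum>k\<le>n. (b k + of_nat k * b (k - 1)) * of_nat (Stirling n k))"
proof -
  have "(\<Sum>k\<le>n. of_nat (Suc k) * b k * of_nat (Stirling n (Suc k)))
      = (\<Sum>k\<le>Suc n. of_nat k * b (k - 1) * of_nat (Stirling n k))"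
    by (subst sum.atMost_Suc_shift) (simp del: of_nat_Suc)
  also have "\<dots> = (\<Sum>k\<le>n. of_nat k * b (k - 1) * of_nat (Stirling n k))"
    by simp
  finally show ?thesis
    by (simp add: sum.distrib algebra_simps)
qed

lemma sum_alternating_fact_Stirling:
  "(\<Sum>k\<le>m. (-1) ^ k * fact k * of_nat (Stirling (Suc m) (Suc k)) :: 'a::{comm_ring_1,ring_char_0})
     = (if m = 0 then 1 else 0)"
proof -
  have telescope: "(-1) ^ k * fact k + of_nat k * ((-1) ^ (k - 1) * fact (k - 1))
      = (if k = 0 then 1 else (0::'a))" for k
    by (cases k) (simp_all add: algebra_simps)
  have "(\<Sum>k\<le>m. (-1) ^ k * fact k * of_nat (Stirling (Suc m) (Suc k)) :: 'a)
      = (\<Sum>k\<le>m. ((-1) ^ k * fact k + of_nat k * ((-1) ^ (k - 1) * fact (k - 1))) * of_nat (Stirling m k))"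
    by (rule sum_Stirling_Suc_Suc)
  also have "\<dots> = (\<Sum>k\<le>m. (if k = 0 then 1 else 0) * of_nat (Stirling m k))"
    by (simp only: telescope)
  also have "\<dots> = of_nat (Stirling m 0)"
    by (simp add: sum.atMost_shift)
  finally show ?thesis
    by (cases m) simp_all
qed

lemma sum_binomial_Stirling_transform:
  fixes b :: "nat \<Rightarrow> 'a::comm_semiring_1"
  shows "(\<Sum>j\<le>n. of_nat (n choose j) * (\<Sum>k\<le>j. b k * of_nat (Stirling j k)))
       = (\<Sum>k\<le>n. b k * of_nat (Stirling (Suc n) (Suc k)))"
proof -
  have "(\<Sum>k\<le>j. b k * of_nat (Stirling j k)) = (\<Sum>k\<le>n. b k * of_nat (Stirling j k))"
    if "j \<le> n" for j
    using that by (intro sum.mono_neutral_left) auto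
  then have "(\<Sum>j\<le>n. of_nat (n choose j) * (\<Sum>k\<le>j. b k * of_nat (Stirling j k)))
      = (\<Sum>j\<le>n. \<Sum>k\<le>n. b k * (of_nat (n choose j) * of_nat (Stirling j k)))"
    by (simp add: sum_distrib_left mult.left_commute)
  also have "\<dots> = (\<Sum>k\<le>n. b k * of_nat (\<Sum>j\<le>n. (n choose j) * Stirling j k))"
    by (subst sum.swap) (simp add: sum_distrib_left)
  finally show ?thesis
    by (simp only: Stirling_Suc_Suc_eq_sum_binomial)
qed

definition genocchi_Stirling :: "nat \<Rightarrow> rat" where
  "genocchi_Stirling n = (\<Sum>k\<le>n. (-1) ^ Suc k * of_nat (a_seq k) * of_nat (Stirling n k))"

lemma genocchi_Stirling_binomial_rec:
  "genocchi_Stirling n + (\<Sum>j\<le>n. of_nat (n choose j) * genocchi_Stirling j)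
     = 2 * (if n = 1 then 1 else 0)"
proof -
  define b :: "nat \<Rightarrow> rat" where "b k = (-1) ^ Suc k * of_nat (a_seq k)" for k
  have unfold_b: "genocchi_Stirling j = (\<Sum>k\<le>j. b k * of_nat (Stirling j k))" for j
    by (simp add: genocchi_Stirling_def b_def)
  have coeff: "2 * b (Suc k) + of_nat (Suc k) * b k = 2 * ((-1) ^ k * fact k)" for k
  proof -
    have rec: "2 * of_nat (a_seq (Suc k)) = of_nat (Suc k) * of_nat (a_seq k) + (2 * fact k :: rat)"
      using arg_cong[OF a_seq_Suc_rec[of k], of "of_nat :: nat \<Rightarrow> rat"]
      by (simp add: algebra_simps)
    have "2 * b (Suc k) + of_nat (Suc k) * b k
        = (-1) ^ k * (2 * of_nat (a_seq (Suc k)) - of_nat (Suc k) * of_nat (a_seq k))"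
      by (simp add: b_def algebra_simps)
    with rec show ?thesis
      by simp
  qed
  have "genocchi_Stirling n + (\<Sum>j\<le>n. of_nat (n choose j) * genocchi_Stirling j)
      = (\<Sum>k\<le>n. b k * of_nat (Stirling n k)) + (\<Sum>k\<le>n. b k * of_nat (Stirling (Suc n) (Suc k)))"
    by (simp only: unfold_b sum_binomial_Stirling_transform)
  also have "\<dots> = (\<Sum>k\<le>n. (2 * b k + of_nat k * b (k - 1)) * of_nat (Stirling n k))"
    by (simp only: sum_Stirling_Suc_Suc) (simp add: sum.distrib[symmetric] algebra_simps)
  also have "\<dots> = 2 * (if n = 1 then 1 else 0)"
  proof (cases n)
    case 0
    then show ?thesis by (simp add: b_def a_seq_def)
  next
    case (Suc m)
    have "(\<Sum>k\<le>n. (2 * b k + of_nat k * b (k - 1)) * of_nat (Stirling n k))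
        = (\<Sum>k\<le>m. (2 * b (Suc k) + of_nat (Suc k) * b k) * of_nat (Stirling (Suc m) (Suc k)))"
      unfolding Suc by (simp only: sum.atMost_Suc_shift) simp
    also have "\<dots> = 2 * (\<Sum>k\<le>m. (-1) ^ k * fact k * of_nat (Stirling (Suc m) (Suc k)))"
      by (simp only: coeff sum_distrib_left mult.assoc)
    also have "\<dots> = 2 * (if m = 0 then 1 else 0)"
      by (simp only: sum_alternating_fact_Stirling)
    finally show ?thesis
      using Suc by simp
  qed
  finally show ?thesis .
qed

lemma fact_mult_fps_nth_mult_exp:
  fixes F :: "'a::field_char_0 fps"
  shows "fact n * (F * fps_exp 1) $ n = (\<Sum>j\<le>n. of_nat (n choose j) * (fact j * F $ j))"
proof -
  have "fact n * (F * fps_exp 1) $ n = (\<Sum>j\<le>n. fact n * (F $ j / fact (n - j)))"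
    by (simp add: fps_mult_nth sum_distrib_left atLeast0AtMost)
  also have "\<dots> = (\<Sum>j\<le>n. of_nat (n choose j) * (fact j * F $ j))"
    by (rule sum.cong) (simp_all add: binomial_fact field_simps)
  finally show ?thesis .
qed

lemma genocchi_binomial_rec:
  "genocchi n + (\<Sum>j\<le>n. of_nat (n choose j) * genocchi j) = 2 * (if n = 1 then 1 else 0)"
proof -
  define F :: "rat fps" where "F = 2 * fps_X / (fps_exp 1 + 1)"
  have F_mult: "F * (fps_exp 1 + 1) = 2 * fps_X"
    unfolding F_def by (rule fps_times_divide_eq) (auto simp: fps_eq_iff)
  have "fact n * F $ n + fact n * (F * fps_exp 1) $ n = fact n * (F * (fps_exp 1 + 1)) $ n"
    by (simp add: algebra_simps)
  also have "\<dots> = fact n * (2 * fps_X :: rat fps) $ n"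
    by (simp only: F_mult)
  also have "\<dots> = 2 * (if n = 1 then 1 else 0)"
    by (simp add: fps_mult_nth fps_numeral_nth sum.atLeast_Suc_atMost)
  finally show ?thesis
    by (simp add: genocchi_def F_def fact_mult_fps_nth_mult_exp)
qed

lemma binomial_rec_unique:
  fixes f g :: "nat \<Rightarrow> 'a::field_char_0"
  assumes "\<And>n. f n + (\<Sum>j\<le>n. of_nat (n choose j) * f j) = c n"
      and "\<And>n. g n + (\<Sum>j\<le>n. of_nat (n choose j) * g j) = c n"
  shows "f n = g n"
proof (induction n rule: less_induct)
  case (less n)
  have "2 * f n + (\<Sum>j<n. of_nat (n choose j) * f j) = c n"
    using assms(1)[of n] by (simp add: lessThan_Suc_atMost[symmetric])
  moreover have "2 * g n + (\<Sum>j<n. of_nat (n choose j) * g j) = c n"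
    using assms(2)[of n] by (simp add: lessThan_Suc_atMost[symmetric])
  moreover have "(\<Sum>j<n. of_nat (n choose j) * f j) = (\<Sum>j<n. of_nat (n choose j) * g j)"
    using less by (intro sum.cong) auto
  ultimately have "2 * f n = 2 * g n"
    by (metis add_right_cancel)
  then show ?case
    by simp
qed

lemma power_int_minus_one_pred: "(-1 :: 'a::field) powi (int k - 1) = (-1) ^ Suc k"
  by (simp add: power_int_diff)

theorem mainTheorem6:
  fixes n :: nat
  shows "genocchi n =
    (\<Sum>k=0..n. (-1::rat) powi (int k - 1) * of_nat (a_seq k) * of_nat (Stirling n k))"
proof -
  have "genocchi n = genocchi_Stirling n"
    using genocchi_binomial_rec genocchi_Stirling_binomial_rec by (rule binomial_rec_unique)
  then show ?thesis
    by (simp add: genocchi_Stirling_def power_int_minus_one_pred atLeast0AtMost)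
qed

end
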